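(* Consider the problem of maximizing a linear function $g(\mathbf{z})$ over $\mathbf{z}=(\mathbf{x},\mathbf{y})\in\mathbb{R}^{m+n}$ subject to $\mathcal{B}(\mathbf{x},\mathbf{y})\preceq 0$, where $\mathcal{B}(\mathbf{x},\mathbf{y})=F+\sum_i x_iH_i+\sum_j y_jG_j+\sum_{i,j}x_iy_jF_{i,j}$. Run the iterative procedure described below starting from a strictly feasible $\mathbf{z}^0$ (i.e., $\mathcal{B}(\mathbf{z}^0)\prec 0$). Then every iterate $\mathbf{z}^i$ produced by the procedure (for every $i$ for which it is produced) is a feasible solution of this problem, i.e., $\mathcal{B}(\mathbf{z}^i)\preceq 0$.
   Context: $F,H_i,G_j,F_{i,j}$ are constant real symmetric $p\times p$ matrices; $\preceq$ is the positive-semidefinite (Loewner) order. Decompose $\mathcal{B}=\mathcal{B}^+-\mathcal{B}^-$ as follows: $\Gamma$ is the $mp\times np$ block matrix with $(i,j)$ block $\tfrac12F_{i,j}$, $\Omega=(H_1\cdots H_m\ G_1\cdots G_n)$, $M=\begin{pmatrix}0&\Gamma\\ \Gamma^{\mathsf T}&0\end{pmatrix}=V^{\mathsf T}DV$ an eigendecomposition, $D^+$ is $D$ with negative entries set to $0$, $D^-=D^+-D$, $M_1=V^{\mathsf T}D^+V$, $M_2=V^{\mathsf T}D^-V$, $\mathcal{B}^+(\mathbf{z})=(\mathbf{z}\otimes I)^{\mathsf T}M_1(\mathbf{z}\otimes I)+\Omega(\mathbf{z}\otimes I)+F$, $\mathcal{B}^-(\mathbf{z})=(\mathbf{z}\otimes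 I)^{\mathsf T}M_2(\mathbf{z}\otimes I)$ ($I$ the $p\times p$ identity). $\mathcal{D}\mathcal{B}^-(\mathbf{z})(\mathbf{u})=\sum_i u_i\,\partial\mathcal{B}^-/\partial z_i(\mathbf{z})$. The iterative procedure (Algorithm 1, BMI-DC): given $\mathbf{z}^k$, let $\mathbf{z}^{k+1}$ be an optimal solution of the convex problem: maximize $g(\mathbf{z})+\tfrac12\delta\|\mathbf{z}-\mathbf{z}^k\|^2$ (with a fixed $\delta<0$) subject to $\mathcal{B}^+(\mathbf{z})-\mathcal{B}^-(\mathbf{z}^k)-\mathcal{D}\mathcal{B}^-(\mathbf{z}^k)(\mathbf{z}-\mathbf{z}^k)\preceq 0$; repeat until $\|\mathbf{z}^k-\mathbf{z}^{k-1}\|<\varepsilon$ for a given tolerance $\varepsilon\ge 0$, and return the set of all iterates $\mathbf{z}^0,\dots,\mathbf{z}^k$. *)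

theory Defs
  imports "HOL-Analysis.Analysis"
begin

(* p x p real matrices are  real^'p^'p ; z = (x,y) in R^(m+n) is  real^('m+'n)
   with x_i = z$(Inl i), y_j = z$(Inr j). Block matrices of size (m+n)p are
   indexed by ('m+'n) x 'p, i.e. block index k and inner index a. *)

definition symmetric_mat :: "real^'k^'k \<Rightarrow> bool" where
  "symmetric_mat A \<longleftrightarrow> transpose A = A"

definition diagonal_mat :: "real^'k^'k \<Rightarrow> bool" where
  "diagonal_mat D \<longleftrightarrow> (\<forall>i j. i \<noteq> j \<longrightarrow> D$i$j = 0)"

definition loewner_le :: "real^'k^'k \<Rightarrow> real^'k^'k \<Rightarrow> bool" where
  "loewner_le A B \<longleftrightarrow> (\<forall>v. 0 \<le> v \<bullet> ((B - A) *v v))"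

definition loewner_less :: "real^'k^'k \<Rightarrow> real^'k^'k \<Rightarrow> bool" where
  "loewner_less A B \<longleftrightarrow> (\<forall>v. v \<noteq> 0 \<longrightarrow> 0 < v \<bullet> ((B - A) *v v))"

definition BMI ::
  "real^'p^'p \<Rightarrow> ('m \<Rightarrow> real^'p^'p) \<Rightarrow> ('n \<Rightarrow> real^'p^'p) \<Rightarrow> ('m \<Rightarrow> 'n \<Rightarrow> real^'p^'p)
   \<Rightarrow> real^('m::finite + 'n::finite) \<Rightarrow> real^'p^'p" where
  "BMI F H G Fm z = F + (\<Sum>i\<in>UNIV. z$(Inl i) *\<^sub>R H i) + (\<Sum>j\<in>UNIV. z$(Inr j) *\<^sub>R G j)
      + (\<Sum>i\<in>UNIV. \<Sum>j\<in>UNIV. (z$(Inl i) * z$(Inr j)) *\<^sub>R Fm i j)"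

definition kronI :: "real^'k::finite \<Rightarrow> real^'p::finite^('k \<times> 'p)" where
  "kronI z = (\<chi> r b. if snd r = b then z$(fst r) else 0)"

definition Gamma :: "('m::finite \<Rightarrow> 'n::finite \<Rightarrow> real^'p::finite^'p) \<Rightarrow> real^('n \<times> 'p)^('m \<times> 'p)" where
  "Gamma Fm = (\<chi> r c. (1/2) * Fm (fst r) (fst c) $ snd r $ snd c)"

definition Mmat :: "('m::finite \<Rightarrow> 'n::finite \<Rightarrow> real^'p::finite^'p) \<Rightarrow> real^(('m+'n) \<times> 'p)^(('m+'n) \<times> 'p)" where
  "Mmat Fm = (\<chi> r c. case (fst r, fst c) of
       (Inl i, Inr j) \<Rightarrow> Gamma Fm $ (i, snd r) $ (j, snd c)
     | (Inr j, Inl i) \<Rightarrow> transpose (Gamma Fm) $ (j, snd r) $ (i, snd c)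
     | _ \<Rightarrow> 0)"

definition Omega :: "('m::finite \<Rightarrow> real^'p::finite^'p) \<Rightarrow> ('n::finite \<Rightarrow> real^'p^'p) \<Rightarrow> real^(('m+'n) \<times> 'p)^'p" where
  "Omega H G = (\<chi> a c. case fst c of Inl i \<Rightarrow> H i $ a $ snd c | Inr j \<Rightarrow> G j $ a $ snd c)"

definition Dplus :: "real^'k^'k \<Rightarrow> real^'k^'k" where
  "Dplus D = (\<chi> i j. max (D$i$j) 0)"

definition Dminus :: "real^'k^'k \<Rightarrow> real^'k^'k" where
  "Dminus D = Dplus D - D"

definition M1 :: "real^'k^'k \<Rightarrow> real^'k^'k \<Rightarrow> real^'k^'k" where
  "M1 V D = transpose V ** Dplus D ** V"

definition M2 :: "real^'k^'k \<Rightarrow> real^'k^'k \<Rightarrow> real^'k^'k" where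
  "M2 V D = transpose V ** Dminus D ** V"

definition Bplus ::
  "real^'p^'p \<Rightarrow> ('m \<Rightarrow> real^'p^'p) \<Rightarrow> ('n \<Rightarrow> real^'p^'p)
   \<Rightarrow> real^(('m::finite+'n::finite) \<times> 'p)^(('m+'n) \<times> 'p) \<Rightarrow> real^(('m+'n) \<times> 'p)^(('m+'n) \<times> 'p)
   \<Rightarrow> real^('m+'n) \<Rightarrow> real^'p^'p" where
  "Bplus F H G V D z = transpose (kronI z) ** M1 V D ** kronI z + Omega H G ** kronI z + F"

definition Bminus ::
  "real^(('m::finite+'n::finite) \<times> 'p)^(('m+'n) \<times> 'p) \<Rightarrow> real^(('m+'n) \<times> 'p)^(('m+'n) \<times> 'p)
   \<Rightarrow> real^('m+'n) \<Rightarrow> real^'p^'p" where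
  "Bminus V D z = transpose (kronI z) ** M2 V D ** kronI z"

definition DBminus ::
  "real^(('m::finite+'n::finite) \<times> 'p)^(('m+'n) \<times> 'p) \<Rightarrow> real^(('m+'n) \<times> 'p)^(('m+'n) \<times> 'p)
   \<Rightarrow> real^('m+'n) \<Rightarrow> real^('m+'n) \<Rightarrow> real^'p^'p" where
  "DBminus V D z u = (\<Sum>k\<in>UNIV. u$k *\<^sub>R
      vector_derivative (\<lambda>t. Bminus V D (z + t *\<^sub>R axis k 1)) (at 0))"

definition sub_feasible where
  "sub_feasible F H G V D zk z \<longleftrightarrow>
     loewner_le (Bplus F H G V D z - Bminus V D zk - DBminus V D zk (z - zk)) 0"

definition sub_optimal where
  "sub_optimal g \<delta> F H G V D zk z \<longleftrightarrow>
     sub_feasible F H G V D zk z \<and>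
     (\<forall>w. sub_feasible F H G V D zk w \<longrightarrow>
        g w + \<delta>/2 * (norm (w - zk))\<^sup>2 \<le> g z + \<delta>/2 * (norm (z - zk))\<^sup>2)"

end

theory Submission imports Defs begin

text \<open>The splitting \<open>M = M\<^sub>1 - M\<^sub>2\<close> into positive semidefinite parts writes \<open>\<B> = \<B>\<^sup>+ - \<B>\<^sup>-\<close>
  with \<open>\<B>\<^sup>-(z) = (z \<otimes> I)\<^sup>T M\<^sub>2 (z \<otimes> I)\<close> convex in the Loewner order: since \<open>z \<mapsto> z \<otimes> I\<close> is
  linear, \<open>\<B>\<^sup>-(z) - \<B>\<^sup>-(z\<^sup>k) - D\<B>\<^sup>-(z\<^sup>k)(z - z\<^sup>k) = ((z - z\<^sup>k) \<otimes> I)\<^sup>T M\<^sub>2 ((z - z\<^sup>k) \<otimes> I) \<succeq> 0\<close>.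
  Hence the convex constraint of each subproblem is an inner approximation of the BMI:
  every point satisfying it, in particular every new iterate, satisfies \<open>\<B>(z) \<preceq> 0\<close>.\<close>

lemma matrix_add_rdistrib: "(B + C) ** A = B ** A + C ** A"
  by (vector matrix_matrix_mult_def sum.distrib[symmetric] field_simps)

lemma matrix_diff_ldistrib: "A ** (B - C) = A ** B - A ** (C :: 'a::ring_1^_^_)"
  by (vector matrix_matrix_mult_def sum_subtractf[symmetric] field_simps)

lemma matrix_diff_rdistrib: "(B - C) ** A = B ** A - C ** (A :: 'a::ring_1^_^_)"
  by (vector matrix_matrix_mult_def sum_subtractf[symmetric] field_simps)

lemma transpose_add: "transpose (A + B) = transpose A + transpose B"
  by (vector transpose_def)

lemma quadratic_form_congruence:
  "(v :: real^_) \<bullet> ((transpose K ** M ** K) *v v) = (K *v v) \<bullet> (M *v (K *v v))"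
proof -
  have "(transpose K ** M ** K) *v v = transpose K *v (M *v (K *v v))"
    by (simp only: matrix_vector_mul_assoc matrix_mul_assoc)
  also have "\<dots> = (M *v (K *v v)) v* K"
    by (rule transpose_matrix_vector)
  finally have "v \<bullet> ((transpose K ** M ** K) *v v) = ((M *v (K *v v)) v* K) \<bullet> v"
    by (simp add: inner_commute)
  also have "\<dots> = (M *v (K *v v)) \<bullet> (K *v v)"
    by (rule dot_lmul_matrix)
  finally show ?thesis
    by (simp add: inner_commute)
qed

lemma loewner_less_imp_le: "loewner_less A B \<Longrightarrow> loewner_le A B"
  unfolding loewner_less_def loewner_le_def
  by (metis inner_zero_left less_eq_real_def order_refl)

lemma loewner_le_trans:
  assumes "loewner_le A B" and "loewner_le B C"
  shows "loewner_le A C"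
  unfolding loewner_le_def
proof
  fix v
  have "v \<bullet> ((C - A) *v v) = v \<bullet> ((B - A) *v v) + v \<bullet> ((C - B) *v v)"
    by (simp add: matrix_vector_mult_diff_rdistrib inner_diff_right)
  then show "0 \<le> v \<bullet> ((C - A) *v v)"
    using assms unfolding loewner_le_def by (metis add_nonneg_nonneg)
qed

lemma loewner_le_congruence:
  assumes "loewner_le 0 M"
  shows "loewner_le 0 (transpose K ** M ** K)"
  using assms by (simp add: loewner_le_def quadratic_form_congruence)

lemma diagonal_nonneg_imp_loewner_nonneg:
  assumes "diagonal_mat D" and "\<And>i. 0 \<le> D $ i $ i"
  shows "loewner_le 0 D"
  unfolding loewner_le_def
proof
  fix v :: "real^_"
  have "(D *v v) $ i = D $ i $ i * v $ i" for i
  proof -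
    have "(D *v v) $ i = (\<Sum>j\<in>UNIV. D $ i $ j * v $ j)"
      by (simp add: matrix_vector_mult_def)
    also have "\<dots> = (\<Sum>j\<in>UNIV. if j = i then D $ i $ i * v $ i else 0)"
      by (rule sum.cong) (use assms(1) in \<open>auto simp: diagonal_mat_def\<close>)
    finally show ?thesis by simp
  qed
  then have "v \<bullet> ((D - 0) *v v) = (\<Sum>i\<in>UNIV. D $ i $ i * (v $ i)\<^sup>2)"
    by (simp add: inner_vec_def power2_eq_square mult_ac)
  then show "0 \<le> v \<bullet> ((D - 0) *v v)"
    by (simp add: assms(2) sum_nonneg)
qed

lemma M2_loewner_nonneg:
  assumes "diagonal_mat D"
  shows "loewner_le 0 (M2 V D)"
proof -
  have "diagonal_mat (Dminus D)"
    using assms by (simp add: diagonal_mat_def Dminus_def Dplus_def)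
  moreover have "0 \<le> Dminus D $ i $ i" for i
    by (simp add: Dminus_def Dplus_def)
  ultimately show ?thesis
    unfolding M2_def by (intro loewner_le_congruence diagonal_nonneg_imp_loewner_nonneg)
qed

lemma congruence_add_expand:
  fixes M :: "real^'k^'k" and K L :: "real^'p^'k"
  shows "transpose (K + t *\<^sub>R L) ** M ** (K + t *\<^sub>R L) =
    transpose K ** M ** K + t *\<^sub>R (transpose L ** M ** K + transpose K ** M ** L)
    + t\<^sup>2 *\<^sub>R (transpose L ** M ** L)"
  by (simp add: transpose_add transpose_scalar matrix_add_rdistrib matrix_add_ldistrib
     matrix_scalar_ac scalar_matrix_assoc[symmetric] algebra_simps power2_eq_square)

lemma vector_derivative_quadratic_at_0:
  fixes A X Y :: "real^'k^'j"
  shows "vector_derivative (\<lambda>t. A + t *\<^sub>R X + t\<^sup>2 *\<^sub>R Y) (at 0) = X"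
  by (rule vector_derivative_at) (auto intro!: derivative_eq_intros)

lemma kronI_add: "kronI (a + b) = kronI a + kronI b"
  by (vector kronI_def)

lemma kronI_scaleR: "kronI (c *\<^sub>R a) = c *\<^sub>R kronI a"
  by (vector kronI_def)

lemma linear_kronI: "linear kronI"
  by (rule linearI) (simp_all add: kronI_add kronI_scaleR)

lemma kronI_basis_expansion:
  "(\<Sum>k\<in>UNIV. u $ k *\<^sub>R kronI (axis k 1)) = kronI (u :: real^'k::finite)"
proof -
  have "kronI u = kronI (\<Sum>k\<in>UNIV. u $ k *\<^sub>R axis k 1)"
    using basis_expansion[of u] by (simp add: scalar_mult_eq_scaleR)
  also have "\<dots> = (\<Sum>k\<in>UNIV. u $ k *\<^sub>R kronI (axis k 1))"
    by (simp only: linear_sum[OF linear_kronI] linear_scale[OF linear_kronI])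
  finally show ?thesis by (rule sym)
qed

lemma sum_kronI_column:
  fixes f g :: "'k::finite \<times> 'p::finite \<Rightarrow> real"
  shows "(\<Sum>r\<in>UNIV. (if snd r = a then f r else 0) * g r) = (\<Sum>k\<in>UNIV. f (k, a) * g (k, a))"
proof -
  have "(\<Sum>r\<in>UNIV. (if snd r = a then f r else 0) * g r)
      = (\<Sum>k\<in>UNIV. \<Sum>b\<in>UNIV. (if b = a then f (k, b) else 0) * g (k, b))"
    unfolding sum.cartesian_product UNIV_Times_UNIV by (rule sum.cong) auto
  also have "\<dots> = (\<Sum>k\<in>UNIV. f (k, a) * g (k, a))"
    by (simp add: if_distrib if_distribR sum.delta cong: if_cong)
  finally show ?thesis .
qed

lemma sum_kronI_row:
  fixes f g :: "'k::finite \<times> 'p::finite \<Rightarrow> real"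
  shows "(\<Sum>r\<in>UNIV. g r * (if snd r = a then f r else 0)) = (\<Sum>k\<in>UNIV. g (k, a) * f (k, a))"
  using sum_kronI_column[of a f g] by (simp add: mult.commute)

lemma sum_UNIV_Plus:
  "(\<Sum>k\<in>(UNIV :: ('a::finite + 'b::finite) set). f k) = (\<Sum>i\<in>UNIV. f (Inl i)) + (\<Sum>j\<in>UNIV. f (Inr j))"
  by (subst UNIV_Plus_UNIV[symmetric], subst sum.Plus) auto

lemma Omega_kronI:
  "Omega H G ** kronI z = (\<Sum>i\<in>UNIV. z $ Inl i *\<^sub>R H i) + (\<Sum>j\<in>UNIV. z $ Inr j *\<^sub>R G j)"
  by (simp add: vec_eq_iff matrix_matrix_mult_def kronI_def Omega_def sum_kronI_row sum_kronI_column
      sum_UNIV_Plus sum_component) (simp add: mult_ac)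

text \<open>Symmetry of the \<open>F\<^sub>i\<^sub>,\<^sub>j\<close> is what lets the two off-diagonal blocks \<open>\<Gamma>\<close> and \<open>\<Gamma>\<^sup>T\<close> of \<open>M\<close>
  contribute \<open>x\<^sub>i y\<^sub>j F\<^sub>i\<^sub>,\<^sub>j / 2\<close> each.\<close>

lemma Mmat_kronI:
  assumes "\<And>i j. symmetric_mat (Fm i j)"
  shows "transpose (kronI z) ** Mmat Fm ** kronI z
    = (\<Sum>i\<in>UNIV. \<Sum>j\<in>UNIV. (z $ Inl i * z $ Inr j) *\<^sub>R Fm i j)"
proof -
  have sym: "Fm i j $ b $ a = Fm i j $ a $ b" for i j a b
    using assms[of i j] unfolding symmetric_mat_def transpose_def by (metis vec_lambda_beta)
  show ?thesis
    apply (simp add: vec_eq_iff matrix_matrix_mult_def kronI_def transpose_def sum_kronI_row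
        sum_kronI_column sum_UNIV_Plus sum_component Mmat_def Gamma_def sym sum_distrib_right)
    apply (subst (2) sum.swap)
    apply (simp add: sum.distrib[symmetric] mult_ac)
    done
qed

lemma BMI_eq_Bplus_minus_Bminus:
  assumes "\<And>i j. symmetric_mat (Fm i j)" and "Mmat Fm = transpose V ** D ** V"
  shows "BMI F H G Fm z = Bplus F H G V D z - Bminus V D z"
proof -
  have "M1 V D - M2 V D = Mmat Fm"
    unfolding M1_def M2_def assms(2) Dminus_def
    by (simp add: matrix_diff_ldistrib matrix_diff_rdistrib)
  then have "Bplus F H G V D z - Bminus V D z
     = transpose (kronI z) ** Mmat Fm ** kronI z + Omega H G ** kronI z + F"
    unfolding Bplus_def Bminus_def
    by (simp add: matrix_add_ldistrib matrix_add_rdistrib algebra_simps)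
  also have "\<dots> = BMI F H G Fm z"
    unfolding Mmat_kronI[OF assms(1)] Omega_kronI BMI_def by (simp add: algebra_simps)
  finally show ?thesis by simp
qed

lemma DBminus_eq:
  "DBminus V D zk u
    = transpose (kronI u) ** M2 V D ** kronI zk + transpose (kronI zk) ** M2 V D ** kronI u"
proof -
  define f where "f L = transpose L ** M2 V D ** kronI zk + transpose (kronI zk) ** M2 V D ** L" for L
  have "linear f"
    by (rule linearI) (simp_all add: f_def transpose_add transpose_scalar matrix_add_rdistrib
        matrix_add_ldistrib matrix_scalar_ac scalar_matrix_assoc[symmetric] algebra_simps)
  have partial: "vector_derivative (\<lambda>t. Bminus V D (zk + t *\<^sub>R axis k 1)) (at 0)
      = f (kronI (axis k 1))" for k
    unfolding Bminus_def kronI_add kronI_scaleR congruence_add_expand f_def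
    by (rule vector_derivative_quadratic_at_0)
  have "DBminus V D zk u = (\<Sum>k\<in>UNIV. u $ k *\<^sub>R f (kronI (axis k 1)))"
    unfolding DBminus_def partial ..
  also have "\<dots> = f (\<Sum>k\<in>UNIV. u $ k *\<^sub>R kronI (axis k 1))"
    by (simp add: linear_sum[OF \<open>linear f\<close>] linear_scale[OF \<open>linear f\<close>])
  also have "\<dots> = f (kronI u)"
    by (simp add: kronI_basis_expansion)
  finally show ?thesis by (simp add: f_def)
qed

lemma Bminus_linearization_gap:
  "Bminus V D z - Bminus V D zk - DBminus V D zk (z - zk)
    = transpose (kronI (z - zk)) ** M2 V D ** kronI (z - zk)"
proof -
  have split: "kronI z = kronI zk + 1 *\<^sub>R kronI (z - zk)"
    by (simp add: kronI_add[symmetric])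
  show ?thesis
    unfolding Bminus_def DBminus_eq split congruence_add_expand by simp
qed

lemma Bminus_ge_linearization:
  assumes "diagonal_mat D"
  shows "loewner_le (Bminus V D zk + DBminus V D zk (z - zk)) (Bminus V D z)"
  using loewner_le_congruence[OF M2_loewner_nonneg[OF assms], where K = "kronI (z - zk)"]
  by (simp add: loewner_le_def Bminus_linearization_gap[symmetric] diff_diff_eq)

lemma sub_feasible_imp_BMI_feasible:
  assumes "\<And>i j. symmetric_mat (Fm i j)" and "Mmat Fm = transpose V ** D ** V"
    and "diagonal_mat D"
    and "sub_feasible F H G V D zk z"
  shows "loewner_le (BMI F H G Fm z) 0"
proof (rule loewner_le_trans)
  show "loewner_le (BMI F H G Fm z)
      (Bplus F H G V D z - Bminus V D zk - DBminus V D zk (z - zk))"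
    using Bminus_ge_linearization[OF assms(3), where zk = zk and z = z]
    by (simp add: BMI_eq_Bplus_minus_Bminus[OF assms(1,2)] loewner_le_def algebra_simps)
  show "loewner_le (Bplus F H G V D z - Bminus V D zk - DBminus V D zk (z - zk)) 0"
    using assms(4) unfolding sub_feasible_def .
qed

theorem theorem9:
  fixes F :: "real^'p::finite^'p"
    and H :: "'m::finite \<Rightarrow> real^'p^'p"
    and G :: "'n::finite \<Rightarrow> real^'p^'p"
    and Fm :: "'m \<Rightarrow> 'n \<Rightarrow> real^'p^'p"
    and V D :: "real^(('m+'n) \<times> 'p)^(('m+'n) \<times> 'p)"
    and g :: "real^('m+'n) \<Rightarrow> real"
    and \<delta> :: real
    and z :: "nat \<Rightarrow> real^('m+'n)"
    and N :: nat
  assumes "symmetric_mat F"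
    and "\<And>i. symmetric_mat (H i)"
    and "\<And>j. symmetric_mat (G j)"
    and "\<And>i j. symmetric_mat (Fm i j)"
    and "linear g"
    and "\<delta> < 0"
    and "orthogonal_matrix V" and "diagonal_mat D"
    and "Mmat Fm = transpose V ** D ** V"
    and "loewner_less (BMI F H G Fm (z 0)) 0"
    and "\<And>k. k < N \<Longrightarrow> sub_optimal g \<delta> F H G V D (z k) (z (Suc k))"
  shows "\<forall>i\<le>N. loewner_le (BMI F H G Fm (z i)) 0"
proof (intro allI impI)
  fix i assume "i \<le> N"
  show "loewner_le (BMI F H G Fm (z i)) 0"
  proof (cases i)
    case 0
    then show ?thesis using assms(10) by (simp add: loewner_less_imp_le)
  next
    case (Suc k)
    with \<open>i \<le> N\<close> assms(11) have "sub_feasible F H G V D (z k) (z i)"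
      unfolding sub_optimal_def by simp
    then show ?thesis by (rule sub_feasible_imp_BMI_feasible[OF assms(4,9,8)])
  qed
qed

end
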